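(* For every integer $n\ge5$, if $T$ is a uniformly random standard Young tableau of shape $(n,n,n)$, then $$\Pr(T_{3,3}=13)=\frac{110\,n^2(n-1)(n+1)^2(n+2)(233n^2-1933n+3984)}{81(3n-1)(3n-2)(3n-4)(3n-5)(3n-7)(3n-8)(3n-10)(3n-11)}.$$
   Context: A standard Young tableau of shape $(n,n,n)$ is a bijective filling $T$ of the cells $[a,b]$ ($1\le a\le 3$, $1\le b\le n$; row $a$, column $b$) by $\{1,\dots,3n\}$ that increases along each row and down each column. $T_{a,b}$ denotes the entry in cell $[a,b]$. *)

theory Defs
  imports Complex_Main
begin

definition cells3 :: "nat \<Rightarrow> (nat \<times> nat) set" where
  "cells3 n = {1..3} \<times> {1..n}"

text \<open>Standard Young tableaux of shape (n,n,n), as fillings T of the cells,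
  with T extended by 0 outside the shape (so that the set of tableaux is finite).\<close>
definition SYT3 :: "nat \<Rightarrow> (nat \<times> nat \<Rightarrow> nat) set" where
  "SYT3 n = {T. bij_betw T (cells3 n) {1..3*n}
     \<and> (\<forall>c. c \<notin> cells3 n \<longrightarrow> T c = 0)
     \<and> (\<forall>a b. (a, b) \<in> cells3 n \<longrightarrow> (a, Suc b) \<in> cells3 n \<longrightarrow> T (a, b) < T (a, Suc b))
     \<and> (\<forall>a b. (a, b) \<in> cells3 n \<longrightarrow> (Suc a, b) \<in> cells3 n \<longrightarrow> T (a, b) < T (Suc a, b))}"

definition syt_prob :: "nat \<Rightarrow> ((nat \<times> nat \<Rightarrow> nat) \<Rightarrow> bool) \<Rightarrow> real" where
  "syt_prob n P = real (card {T \<in> SYT3 n. P T}) / real (card (SYT3 n))"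

end

theory Submission
  imports Defs
begin

text \<open>Reading the entries 1, ..., 3n of a standard Young tableau of shape (n,n,n) in increasing
  order and recording their rows is a bijection onto the ballot words: words in the letters 1, 2, 3
  with n letters of each kind, every prefix of which has at least as many 1s as 2s and at least as
  many 2s as 3s. Read as unit steps, these are the lattice walks from the origin to (n,n,n) inside
  the chamber x \<ge> y \<ge> z. The entry T(3,3) is 13 exactly when the 13th letter is the third 3, that
  is, the walk is at some point (x, 10 - x, 2) after 12 steps and then steps to (x, 10 - x, 3);
  only x = 5, 6, 7 are possible. Walks from the origin to (p,q,r) and walks from (n-r,n-q,n-p) to
  (n,n,n) are both counted by the hook length formula f(p,q,r): removing the last, respectively
  the first, step gives the recursion f(p,q,r) = f(p,q,r-1) + f(p,q-1,r) + f(p-1,q,r), which the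
  formula satisfies. Hence the probability is
  (1320 f(n-3,n-5,n-5) + 2673 f(n-3,n-4,n-6) + 1925 f(n-3,n-3,n-7)) / f(n,n,n), with
  1320 = f(5,5,2), 2673 = f(6,4,2), 1925 = f(7,3,2), and the rest is a rational function identity.\<close>

section \<open>Walks in the chamber x \<ge> y \<ge> z\<close>

definition prefix_count :: "nat \<Rightarrow> nat \<Rightarrow> nat list \<Rightarrow> nat" where
  "prefix_count i k w = length (filter (\<lambda>x. x = i) (take k w))"

text \<open>The letter i of w is a unit step in coordinate i; the walk starts at (a,b,c), ends at
  (x,y,z) and stays in the chamber.\<close>
definition chamber_walk :: "nat \<Rightarrow> nat \<Rightarrow> nat \<Rightarrow> nat \<Rightarrow> nat \<Rightarrow> nat \<Rightarrow> nat list \<Rightarrow> bool" where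
  "chamber_walk a b c x y z w \<longleftrightarrow> set w \<subseteq> {1,2,3} \<and>
    (\<forall>k. b + prefix_count 2 k w \<le> a + prefix_count 1 k w \<and>
      c + prefix_count 3 k w \<le> b + prefix_count 2 k w) \<and>
    a + prefix_count 1 (length w) w = x \<and> b + prefix_count 2 (length w) w = y \<and>
    c + prefix_count 3 (length w) w = z"

definition chamber_walks :: "nat \<Rightarrow> nat \<Rightarrow> nat \<Rightarrow> nat \<Rightarrow> nat \<Rightarrow> nat \<Rightarrow> nat list set" where
  "chamber_walks a b c x y z = {w. chamber_walk a b c x y z w}"

lemma prefix_count_0 [simp]: "prefix_count i 0 w = 0"
  by (simp add: prefix_count_def)

lemma prefix_count_Nil [simp]: "prefix_count i k [] = 0"
  by (simp add: prefix_count_def)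

lemma prefix_count_Cons_Suc [simp]:
  "prefix_count i (Suc k) (u # v) = (if u = i then 1 else 0) + prefix_count i k v"
  by (simp add: prefix_count_def)

lemma prefix_count_Suc:
  "prefix_count i (Suc k) w = prefix_count i k w + (if k < length w \<and> w ! k = i then 1 else 0)"
  by (cases "k < length w") (simp_all add: prefix_count_def take_Suc_conv_app_nth)

lemma prefix_count_mono: "k \<le> k' \<Longrightarrow> prefix_count i k w \<le> prefix_count i k' w"
  by (induction k' rule: dec_induct) (simp_all add: prefix_count_Suc)

lemma prefix_count_length_sum:
  "set w \<subseteq> {1,2,3} \<Longrightarrow>
    prefix_count 1 (length w) w + prefix_count 2 (length w) w + prefix_count 3 (length w) w = length w"
  by (induction w) auto

lemma prefix_count_intermediate: "j \<le> prefix_count i K w \<Longrightarrow> \<exists>k\<le>K. prefix_count i k w = j"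
proof (induction K)
  case (Suc K)
  then show ?case
    by (cases "j \<le> prefix_count i K w") (auto simp: prefix_count_Suc le_Suc_eq split: if_splits)
qed simp

lemma Least_prefix_count_Suc:
  assumes "k < length w" "w ! k = i"
  shows "(LEAST k'. prefix_count i k' w = prefix_count i (Suc k) w) = Suc k"
proof (rule Least_equality)
  fix k' assume k': "prefix_count i k' w = prefix_count i (Suc k) w"
  show "Suc k \<le> k'"
  proof (rule ccontr)
    assume "\<not> Suc k \<le> k'"
    then have "prefix_count i k' w \<le> prefix_count i k w"
      by (intro prefix_count_mono) simp
    then show False
      using k' assms by (simp add: prefix_count_Suc)
  qed
qed simp

lemma Least_prefix_count_eq:
  assumes "1 \<le> j" "j \<le> prefix_count i (length w) w"
  obtains p where "p < length w" "w ! p = i" "prefix_count i p w = j - 1"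
    "(LEAST k. prefix_count i k w = j) = Suc p"
proof -
  define P where "P = (LEAST k. prefix_count i k w = j)"
  obtain k where "prefix_count i k w = j"
    using prefix_count_intermediate[OF assms(2)] by blast
  then have count_P: "prefix_count i P w = j"
    unfolding P_def by (rule LeastI)
  then obtain p where p: "P = Suc p"
    using assms(1) by (cases P) auto
  have "prefix_count i p w \<noteq> j"
    using not_less_Least[of p "\<lambda>k. prefix_count i k w = j"] p unfolding P_def by simp
  then have "p < length w" "w ! p = i" "prefix_count i p w = j - 1"
    using count_P unfolding p prefix_count_Suc by (auto split: if_splits)
  then show ?thesis
    using that p unfolding P_def by blast
qed

lemma prefix_count_min_length: "prefix_count i k w = prefix_count i (min k (length w)) w"
  by (simp add: prefix_count_def min_def)

lemma prefix_count_map_upt: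
  assumes "k \<le> N"
  shows "prefix_count i k (map f [1..<N+1]) = card {m \<in> {1..k}. f m = i}"
proof -
  have "take k [1..<N+1] = [1..<1+k]"
    by (rule take_upt) (use assms in simp)
  then have "take k (map f [1..<N+1]) = map f [1..<k+1]"
    by (simp add: take_map add.commute)
  then have "prefix_count i k (map f [1..<N+1]) = length (filter (\<lambda>m. f m = i) [1..<k+1])"
    by (simp add: prefix_count_def filter_map comp_def)
  also have "\<dots> = card {m \<in> {1..k}. f m = i}"
    by (subst distinct_length_filter) (auto intro: arg_cong[where f = card])
  finally show ?thesis .
qed

lemma prefix_count_append_left: "k \<le> length u \<Longrightarrow> prefix_count i k (u @ v) = prefix_count i k u"
  by (simp add: prefix_count_def)

lemma chamber_walk_Nil:
  "chamber_walk a b c x y z [] \<longleftrightarrow> b \<le> a \<and> c \<le> b \<and> a = x \<and> b = y \<and> c = z"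
  by (auto simp: chamber_walk_def)

lemma chamber_walk_Cons:
  "chamber_walk a b c x y z (u # v) \<longleftrightarrow> u \<in> {1,2,3} \<and> b \<le> a \<and> c \<le> b \<and>
    chamber_walk (a + (if u = 1 then 1 else 0)) (b + (if u = 2 then 1 else 0))
      (c + (if u = 3 then 1 else 0)) x y z v"
proof -
  have all_nat: "(\<forall>k. P k) \<longleftrightarrow> P 0 \<and> (\<forall>k. P (Suc k))" for P :: "nat \<Rightarrow> bool"
    by (metis not0_implies_Suc)
  show ?thesis
    unfolding chamber_walk_def by (subst all_nat) (auto simp: add_ac)
qed

lemma chamber_walk_bounds:
  "chamber_walk a b c x y z w \<Longrightarrow>
    a \<le> x \<and> b \<le> y \<and> c \<le> z \<and> y \<le> x \<and> z \<le> y \<and> b \<le> a \<and> c \<le> b"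
  unfolding chamber_walk_def by (metis add_0_right prefix_count_0 le_add1)

lemma chamber_walk_append:
  "chamber_walk a b c x y z (u @ v) \<longleftrightarrow>
    (\<exists>x' y' z'. chamber_walk a b c x' y' z' u \<and> chamber_walk x' y' z' x y z v)"
proof (induction u arbitrary: a b c)
  case Nil
  show ?case
    by (auto simp: chamber_walk_Nil dest: chamber_walk_bounds)
next
  case (Cons u0 u)
  show ?case
    unfolding append_Cons chamber_walk_Cons Cons.IH by auto
qed

lemma chamber_walk_length:
  "chamber_walk a b c x y z w \<Longrightarrow> a + b + c + length w = x + y + z"
  unfolding chamber_walk_def using prefix_count_length_sum by fastforce

lemma finite_chamber_walks: "finite (chamber_walks a b c x y z)"
proof (rule finite_subset)
  show "chamber_walks a b c x y z \<subseteq> {w. set w \<subseteq> {1,2,3} \<and> length w \<le> x + y + z}"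
    using chamber_walk_length by (fastforce simp: chamber_walks_def chamber_walk_def)
  show "finite {w. set w \<subseteq> {1::nat,2,3} \<and> length w \<le> x + y + z}"
    by (rule finite_lists_length_le) simp
qed

lemma chamber_walks_empty:
  "\<not> (b \<le> a \<and> c \<le> b \<and> a \<le> x \<and> b \<le> y \<and> c \<le> z \<and> y \<le> x \<and> z \<le> y) \<Longrightarrow>
    chamber_walks a b c x y z = {}"
  by (auto simp: chamber_walks_def dest: chamber_walk_bounds)

lemma card_disjoint_images3:
  assumes "finite A" "finite B" "finite C" "inj f" "inj g" "inj h"
    and "\<And>x y. f x \<noteq> g y" "\<And>x y. f x \<noteq> h y" "\<And>x y. g x \<noteq> h y"
    and "finite E" "E \<inter> (range f \<union> range g \<union> range h) = {}"
  shows "card (E \<union> f ` A \<union> g ` B \<union> h ` C) = card E + card A + card B + card C"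
proof -
  have fin: "finite (f ` A)" "finite (g ` B)" "finite (h ` C)"
    using assms(1-3) by simp_all
  have card_img: "card (f ` A) = card A" "card (g ` B) = card B" "card (h ` C) = card C"
    using assms(4-6) by (simp_all add: card_image inj_on_subset)
  have disj: "(E \<union> f ` A \<union> g ` B) \<inter> h ` C = {}" "(E \<union> f ` A) \<inter> g ` B = {}" "E \<inter> f ` A = {}"
    using assms(7-9,11) by (auto, metis+)
  have "card (E \<union> f ` A \<union> g ` B \<union> h ` C) = card (E \<union> f ` A \<union> g ` B) + card (h ` C)"
    using fin disj assms(10) by (simp add: card_Un_disjoint)
  also have "card (E \<union> f ` A \<union> g ` B) = card (E \<union> f ` A) + card (g ` B)"
    using fin disj assms(10) by (simp add: card_Un_disjoint)
  also have "card (E \<union> f ` A) = card E + card (f ` A)"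
    using fin disj assms(10) by (simp add: card_Un_disjoint)
  finally show ?thesis
    unfolding card_img .
qed

lemma chamber_walks_Cons_decomp:
  assumes "c \<le> b" "b \<le> a"
  shows "chamber_walks a b c x y z = (if a = x \<and> b = y \<and> c = z then {[]} else {}) \<union>
    Cons 1 ` chamber_walks (a+1) b c x y z \<union> Cons 2 ` chamber_walks a (b+1) c x y z \<union>
    Cons 3 ` chamber_walks a b (c+1) x y z"
  (is "?L = ?R")
proof (rule set_eqI)
  fix w
  show "w \<in> ?L \<longleftrightarrow> w \<in> ?R"
    using assms by (cases w) (auto simp: chamber_walks_def chamber_walk_Nil chamber_walk_Cons)
qed

lemma card_chamber_walks_Cons:
  assumes "c \<le> b" "b \<le> a"
  shows "card (chamber_walks a b c x y z) = (if a = x \<and> b = y \<and> c = z then 1 else 0) +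
    card (chamber_walks (a+1) b c x y z) + card (chamber_walks a (b+1) c x y z) +
    card (chamber_walks a b (c+1) x y z)"
  unfolding chamber_walks_Cons_decomp[OF assms]
  by (subst card_disjoint_images3) (auto simp: finite_chamber_walks inj_def)

lemma chamber_walks_snoc_decomp:
  assumes "r \<le> q" "q \<le> p"
  shows "chamber_walks a b c p q r = (if a = p \<and> b = q \<and> c = r then {[]} else {}) \<union>
    (\<lambda>v. v @ [3]) ` (if 0 < r then chamber_walks a b c p q (r-1) else {}) \<union>
    (\<lambda>v. v @ [2]) ` (if r < q then chamber_walks a b c p (q-1) r else {}) \<union>
    (\<lambda>v. v @ [1]) ` (if q < p then chamber_walks a b c (p-1) q r else {})"
  (is "?L = ?R")
proof (rule set_eqI)
  fix w
  show "w \<in> ?L \<longleftrightarrow> w \<in> ?R"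
  proof (cases w rule: rev_exhaust)
    case Nil
    then show ?thesis using assms by (auto simp: chamber_walks_def chamber_walk_Nil)
  next
    case (snoc v u)
    have "chamber_walk a b c p q r (v @ [u]) \<longleftrightarrow>
       u = 3 \<and> 0 < r \<and> chamber_walk a b c p q (r-1) v \<or>
       u = 2 \<and> r < q \<and> chamber_walk a b c p (q-1) r v \<or>
       u = 1 \<and> q < p \<and> chamber_walk a b c (p-1) q r v"
      using assms
      by (auto simp: chamber_walk_append chamber_walk_Cons chamber_walk_Nil dest: chamber_walk_bounds)
    then show ?thesis using snoc by (auto simp: chamber_walks_def)
  qed
qed

lemma card_chamber_walks_snoc:
  assumes "r \<le> q" "q \<le> p"
  shows "card (chamber_walks a b c p q r) = (if a = p \<and> b = q \<and> c = r then 1 else 0) +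
    (if 0 < r then card (chamber_walks a b c p q (r-1)) else 0) +
    (if r < q then card (chamber_walks a b c p (q-1) r) else 0) +
    (if q < p then card (chamber_walks a b c (p-1) q r) else 0)"
  unfolding chamber_walks_snoc_decomp[OF assms]
  by (subst card_disjoint_images3) (auto simp: finite_chamber_walks inj_def)

section \<open>The hook length formula\<close>

definition hook_count :: "nat \<Rightarrow> nat \<Rightarrow> nat \<Rightarrow> real" where
  "hook_count p q r =
    fact (p + q + r) * ((real p - real q + 1) * (real p - real r + 2) * (real q - real r + 1))
      / (fact (p + 2) * fact (q + 1) * fact r)"

lemma hook_count_rec:
  assumes "p + q + r = Suc M" "r \<le> q" "q \<le> p"
  shows "hook_count p q r = (if 0 < r then hook_count p q (r-1) else 0) +
    (if r < q then hook_count p (q-1) r else 0) + (if q < p then hook_count (p-1) q r else 0)"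
proof -
  define F where "F = fact M / (fact (p+2) * fact (q+1) * fact r :: real)"
  define \<Delta> :: "real \<Rightarrow> real \<Rightarrow> real \<Rightarrow> real"
    where "\<Delta> x y z = (x - y + 1) * (x - z + 2) * (y - z + 1)" for x y z
  have h0: "hook_count p q r = F * (real p + real q + real r) * \<Delta> p q r"
    using assms(1) by (simp add: hook_count_def F_def \<Delta>_def)
  have h1: "(if 0 < r then hook_count p q (r-1) else 0) = F * real r * \<Delta> p q (real r - 1)"
  proof (cases r)
    case (Suc r')
    then have "(fact r :: real) = real r * fact r'"
      by simp
    then show ?thesis
      using assms(1) Suc by (simp add: hook_count_def F_def \<Delta>_def)
  qed simp
  have h2: "(if r < q then hook_count p (q-1) r else 0) = F * (real q + 1) * \<Delta> p (real q - 1) r"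
  proof (cases q)
    case (Suc q')
    then have "(fact (q + 1) :: real) = (real q + 1) * fact (q' + 1)"
      by simp
    then show ?thesis
      using assms Suc by (simp add: hook_count_def F_def \<Delta>_def)
  qed (use assms in \<open>simp add: \<Delta>_def\<close>)
  have h3: "(if q < p then hook_count (p-1) q r else 0) = F * (real p + 2) * \<Delta> (real p - 1) q r"
  proof (cases p)
    case (Suc p')
    then have "(fact (p + 2) :: real) = (real p + 2) * fact (p' + 2)"
      by simp
    then show ?thesis
      using assms Suc by (simp add: hook_count_def F_def \<Delta>_def)
  qed (use assms in \<open>simp add: \<Delta>_def\<close>)
  have \<Delta>_rec: "(real p + real q + real r) * \<Delta> p q r =
      real r * \<Delta> p q (real r - 1) + (real q + 1) * \<Delta> p (real q - 1) r + (real p + 2) * \<Delta> (real p - 1) q r"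
    by (simp add: \<Delta>_def algebra_simps)
  show ?thesis
    unfolding h0 h1 h2 h3 mult.assoc \<Delta>_rec by (simp only: distrib_left)
qed

lemma card_chamber_walks_from_origin:
  "r \<le> q \<Longrightarrow> q \<le> p \<Longrightarrow> real (card (chamber_walks 0 0 0 p q r)) = hook_count p q r"
proof (induction "p + q + r" arbitrary: p q r rule: less_induct)
  case less
  show ?case
  proof (cases "p + q + r")
    case 0
    then show ?thesis
      by (simp add: card_chamber_walks_snoc hook_count_def)
  next
    case (Suc M)
    show ?thesis
      unfolding card_chamber_walks_snoc[OF less.prems] hook_count_rec[OF Suc less.prems]
      using Suc less by (simp add: less.hyps)
  qed
qed

lemma card_chamber_walks_to_cube:
  "real (card (chamber_walks a b c n n n)) =
    (if c \<le> b \<and> b \<le> a \<and> a \<le> n then hook_count (n - c) (n - b) (n - a) else 0)"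
proof (induction "3 * n - (a + b + c)" arbitrary: a b c rule: less_induct)
  case less
  show ?case
  proof (cases "c \<le> b \<and> b \<le> a \<and> a \<le> n")
    case False
    then show ?thesis
      by (auto simp: chamber_walks_empty)
  next
    case True
    then have split: "card (chamber_walks a b c n n n) = (if a = n \<and> b = n \<and> c = n then 1 else 0) +
        card (chamber_walks (a + 1) b c n n n) + card (chamber_walks a (b + 1) c n n n) +
        card (chamber_walks a b (c + 1) n n n)"
      by (intro card_chamber_walks_Cons) auto
    show ?thesis
    proof (cases "a = n \<and> b = n \<and> c = n")
      case True
      then show ?thesis
        unfolding split by (simp add: chamber_walks_empty hook_count_def)
    next
      case False
      have "n - c + (n - b) + (n - a) = Suc (3 * n - (a + b + c) - 1)" "n - a \<le> n - b" "n - b \<le> n - c"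
        using True False by auto
      note rec = hook_count_rec[OF this]
      have measure: "3 * n - (a + b + c + 1) < 3 * n - (a + b + c)"
        using True False by auto
      have "real (card (chamber_walks (a + 1) b c n n n)) =
          (if 0 < n - a then hook_count (n - c) (n - b) (n - a - 1) else 0)"
        using less[of "a + 1" b c] measure True by simp
      moreover have "real (card (chamber_walks a (b + 1) c n n n)) =
          (if n - a < n - b then hook_count (n - c) (n - b - 1) (n - a) else 0)"
        using less[of a "b + 1" c] measure True by auto
      moreover have "real (card (chamber_walks a b (c + 1) n n n)) =
          (if n - b < n - c then hook_count (n - c - 1) (n - b) (n - a) else 0)"
        using less[of a b "c + 1"] measure True by auto
      ultimately show ?thesis
        unfolding split of_nat_add rec using True False by simp
    qed
  qed
qed

section \<open>Standard Young tableaux and ballot words\<close>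

abbreviation ballot_words :: "nat \<Rightarrow> nat list set" where
  "ballot_words n \<equiv> chamber_walks 0 0 0 n n n"

lemma mem_cells3_iff: "(i, j) \<in> cells3 n \<longleftrightarrow> i \<in> {1,2,3} \<and> 1 \<le> j \<and> j \<le> n"
  by (auto simp: cells3_def)

lemma ballot_wordsD:
  assumes "w \<in> ballot_words n"
  shows "length w = 3 * n" "set w \<subseteq> {1,2,3}"
    "\<And>i. i \<in> {1,2,3} \<Longrightarrow> prefix_count i (length w) w = n"
    "\<And>k. prefix_count 2 k w \<le> prefix_count 1 k w" "\<And>k. prefix_count 3 k w \<le> prefix_count 2 k w"
  using assms chamber_walk_length[of 0 0 0 n n n w]
  by (auto simp: chamber_walks_def chamber_walk_def)

definition tableau_of_word :: "nat \<Rightarrow> nat list \<Rightarrow> nat \<times> nat \<Rightarrow> nat" where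
  "tableau_of_word n w = (\<lambda>(i, j). if (i, j) \<in> cells3 n then LEAST k. prefix_count i k w = j else 0)"

lemma tableau_of_word_eq_Suc_iff:
  assumes "w \<in> ballot_words n" "(i, j) \<in> cells3 n"
  shows "tableau_of_word n w (i, j) = Suc k \<longleftrightarrow>
    k < length w \<and> w ! k = i \<and> prefix_count i k w = j - 1"
proof -
  have j: "1 \<le> j" "j \<le> prefix_count i (length w) w"
    using assms ballot_wordsD(3)[OF assms(1)] by (auto simp: mem_cells3_iff)
  show ?thesis
  proof
    assume "tableau_of_word n w (i, j) = Suc k"
    then show "k < length w \<and> w ! k = i \<and> prefix_count i k w = j - 1"
      using Least_prefix_count_eq[OF j] assms(2) by (auto simp: tableau_of_word_def)
  next
    assume k: "k < length w \<and> w ! k = i \<and> prefix_count i k w = j - 1"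
    then have "prefix_count i (Suc k) w = j"
      using j(1) by (simp add: prefix_count_Suc)
    then show "tableau_of_word n w (i, j) = Suc k"
      using Least_prefix_count_Suc[of k w i] k assms(2) by (simp add: tableau_of_word_def)
  qed
qed

lemma tableau_of_word_cell:
  assumes "w \<in> ballot_words n" "(i, j) \<in> cells3 n"
  shows "tableau_of_word n w (i, j) \<in> {1..3*n}" "w ! (tableau_of_word n w (i, j) - 1) = i"
    "prefix_count i (tableau_of_word n w (i, j)) w = j"
proof -
  have j: "1 \<le> j" "j \<le> prefix_count i (length w) w"
    using assms ballot_wordsD(3)[OF assms(1)] by (auto simp: mem_cells3_iff)
  obtain p where "tableau_of_word n w (i, j) = Suc p" "p < length w" "w ! p = i" "prefix_count i p w = j - 1"
    using Least_prefix_count_eq[OF j] assms(2) by (auto simp: tableau_of_word_def)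
  then show "tableau_of_word n w (i, j) \<in> {1..3*n}" "w ! (tableau_of_word n w (i, j) - 1) = i"
    "prefix_count i (tableau_of_word n w (i, j)) w = j"
    using j(1) ballot_wordsD(1)[OF assms(1)] by (simp_all add: prefix_count_Suc)
qed

lemma tableau_of_word_nth:
  assumes "w \<in> ballot_words n" "p < 3 * n"
  shows "(w ! p, prefix_count (w ! p) (Suc p) w) \<in> cells3 n"
    "tableau_of_word n w (w ! p, prefix_count (w ! p) (Suc p) w) = Suc p"
proof -
  have len: "length w = 3 * n"
    using ballot_wordsD(1)[OF assms(1)] .
  then have "w ! p \<in> set w"
    using assms(2) by simp
  then have i: "w ! p \<in> {1,2,3}"
    by (rule subsetD[OF ballot_wordsD(2)[OF assms(1)]])
  have "prefix_count (w ! p) (Suc p) w \<le> prefix_count (w ! p) (length w) w"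
    using assms(2) len by (intro prefix_count_mono) simp
  then show cell: "(w ! p, prefix_count (w ! p) (Suc p) w) \<in> cells3 n"
    using i assms(2) len ballot_wordsD(3)[OF assms(1) i] by (simp add: mem_cells3_iff prefix_count_Suc)
  show "tableau_of_word n w (w ! p, prefix_count (w ! p) (Suc p) w) = Suc p"
    using tableau_of_word_eq_Suc_iff[OF assms(1) cell] assms(2) len by (simp add: prefix_count_Suc)
qed

lemma bij_betw_tableau_of_word_cells:
  assumes w: "w \<in> ballot_words n"
  shows "bij_betw (tableau_of_word n w) (cells3 n) {1..3*n}"
proof (rule bij_betw_imageI)
  show "inj_on (tableau_of_word n w) (cells3 n)"
  proof (rule inj_onI, clarify)
    fix i j i' j'
    assume c: "(i, j) \<in> cells3 n" "(i', j') \<in> cells3 n"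
      and eq: "tableau_of_word n w (i, j) = tableau_of_word n w (i', j')"
    then show "i = i' \<and> j = j'"
      using tableau_of_word_cell(2,3)[OF w c(1)] tableau_of_word_cell(2,3)[OF w c(2)] by metis
  qed
  show "tableau_of_word n w ` cells3 n = {1..3*n}"
  proof
    show "tableau_of_word n w ` cells3 n \<subseteq> {1..3*n}"
      using tableau_of_word_cell(1)[OF w] by auto
    show "{1..3*n} \<subseteq> tableau_of_word n w ` cells3 n"
    proof
      fix k assume "k \<in> {1..3*n}"
      then have "k - 1 < 3 * n" "k = Suc (k - 1)"
        by auto
      then show "k \<in> tableau_of_word n w ` cells3 n"
        using tableau_of_word_nth[OF w] by (metis image_eqI)
    qed
  qed
qed

lemma tableau_of_word_row_increasing:
  assumes w: "w \<in> ballot_words n" and c: "(a, b) \<in> cells3 n" "(a, Suc b) \<in> cells3 n"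
  shows "tableau_of_word n w (a, b) < tableau_of_word n w (a, Suc b)"
proof (rule ccontr)
  assume "\<not> ?thesis"
  then have "prefix_count a (tableau_of_word n w (a, Suc b)) w \<le> prefix_count a (tableau_of_word n w (a, b)) w"
    by (intro prefix_count_mono) simp
  then show False
    using tableau_of_word_cell(3)[OF w c(1)] tableau_of_word_cell(3)[OF w c(2)] by simp
qed

lemma tableau_of_word_column_increasing:
  assumes w: "w \<in> ballot_words n" and c: "(a, b) \<in> cells3 n" "(Suc a, b) \<in> cells3 n"
  shows "tableau_of_word n w (a, b) < tableau_of_word n w (Suc a, b)"
proof -
  let ?P = "tableau_of_word n w (Suc a, b)"
  have "a = 1 \<or> a = 2"
    using c by (auto simp: cells3_def)
  then have "prefix_count (Suc a) ?P w \<le> prefix_count a ?P w"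
    using ballot_wordsD(4,5)[OF w] by (auto simp: numeral_2_eq_2 numeral_3_eq_3)
  then have "b \<le> prefix_count a ?P w"
    using tableau_of_word_cell(3)[OF w c(2)] by simp
  then obtain k where k: "k \<le> ?P" "prefix_count a k w = b"
    using prefix_count_intermediate by blast
  have "tableau_of_word n w (a, b) \<le> k"
    using c(1) k(2) by (simp add: tableau_of_word_def Least_le)
  moreover have "tableau_of_word n w (a, b) \<noteq> ?P"
    using tableau_of_word_cell(2)[OF w c(1)] tableau_of_word_cell(2)[OF w c(2)] by auto
  ultimately show ?thesis
    using k(1) by simp
qed

lemma tableau_of_word_SYT3:
  assumes "w \<in> ballot_words n"
  shows "tableau_of_word n w \<in> SYT3 n"
  unfolding SYT3_def mem_Collect_eq
proof (intro conjI allI impI)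
  show "bij_betw (tableau_of_word n w) (cells3 n) {1..3*n}"
    using assms by (rule bij_betw_tableau_of_word_cells)
next
  fix c :: "nat \<times> nat"
  assume "c \<notin> cells3 n"
  then show "tableau_of_word n w c = 0"
    by (cases c) (simp add: tableau_of_word_def)
next
  fix a b
  assume "(a, b) \<in> cells3 n" "(a, Suc b) \<in> cells3 n"
  then show "tableau_of_word n w (a, b) < tableau_of_word n w (a, Suc b)"
    by (rule tableau_of_word_row_increasing[OF assms])
next
  fix a b
  assume "(a, b) \<in> cells3 n" "(Suc a, b) \<in> cells3 n"
  then show "tableau_of_word n w (a, b) < tableau_of_word n w (Suc a, b)"
    by (rule tableau_of_word_column_increasing[OF assms])
qed

definition word_of_tableau :: "nat \<Rightarrow> (nat \<times> nat \<Rightarrow> nat) \<Rightarrow> nat list" where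
  "word_of_tableau n T = map (\<lambda>k. fst (inv_into (cells3 n) T k)) [1..<3*n+1]"

lemma SYT3_bij: "T \<in> SYT3 n \<Longrightarrow> bij_betw T (cells3 n) {1..3*n}"
  by (simp add: SYT3_def)

lemma SYT3_row_strict_mono:
  assumes T: "T \<in> SYT3 n" and c: "(i, j) \<in> cells3 n" "(i, j') \<in> cells3 n" and "j < j'"
  shows "T (i, j) < T (i, j')"
  using c(2) \<open>j < j'\<close>
proof (induction j')
  case (Suc m)
  have row: "(i, m) \<in> cells3 n \<Longrightarrow> T (i, m) < T (i, Suc m)"
    using T Suc.prems(1) by (simp add: SYT3_def)
  show ?case
  proof (cases "j = m")
    case False
    then have "(i, m) \<in> cells3 n" "j < m"
      using c(1) Suc.prems by (auto simp: cells3_def)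
    then show ?thesis
      using Suc.IH row by (meson less_trans)
  qed (use c(1) row in simp)
qed simp

lemma SYT3_row_le_iff:
  assumes "T \<in> SYT3 n" "(i, j) \<in> cells3 n" "(i, j') \<in> cells3 n"
  shows "T (i, j') \<le> T (i, j) \<longleftrightarrow> j' \<le> j"
  using SYT3_row_strict_mono[OF assms(1,2,3)] SYT3_row_strict_mono[OF assms(1,3,2)]
  by (cases j j' rule: linorder_cases) auto

lemma prefix_count_word_of_tableau:
  assumes T: "T \<in> SYT3 n" and i: "i \<in> {1,2,3}" and k: "k \<le> 3 * n"
  shows "prefix_count i k (word_of_tableau n T) = card {j \<in> {1..n}. T (i, j) \<le> k}"
proof -
  let ?row = "\<lambda>m. fst (inv_into (cells3 n) T m)"
  have inj: "inj_on T (cells3 n)"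
    using SYT3_bij[OF T] by (rule bij_betw_imp_inj_on)
  have "prefix_count i k (word_of_tableau n T) = card {m \<in> {1..3*n}. ?row m = i \<and> m \<le> k}"
    unfolding word_of_tableau_def prefix_count_map_upt[OF k] using k by (intro arg_cong[where f = card]) auto
  also have "\<dots> = card {c \<in> cells3 n. fst c = i \<and> T c \<le> k}"
    using SYT3_bij[OF T]
    by (intro bij_betw_same_card[symmetric] bij_betw_Collect) (auto simp: inv_into_f_f[OF inj])
  also have "{c \<in> cells3 n. fst c = i \<and> T c \<le> k} = Pair i ` {j \<in> {1..n}. T (i, j) \<le> k}"
    using i by (auto simp: cells3_def)
  also have "card \<dots> = card {j \<in> {1..n}. T (i, j) \<le> k}"
    by (rule card_image) (simp add: inj_on_def)
  finally show ?thesis .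
qed

lemma length_word_of_tableau [simp]: "length (word_of_tableau n T) = 3 * n"
  by (simp add: word_of_tableau_def)

lemma set_word_of_tableau:
  assumes T: "T \<in> SYT3 n"
  shows "set (word_of_tableau n T) \<subseteq> {1,2,3}"
proof -
  have "fst (inv_into (cells3 n) T k) \<in> {1,2,3}" if "k \<in> {1..3*n}" for k
  proof -
    have "inv_into (cells3 n) T k \<in> cells3 n"
      using that bij_betw_imp_surj_on[OF SYT3_bij[OF T]] by (auto intro: inv_into_into)
    then show ?thesis
      by (auto simp: cells3_def)
  qed
  then show ?thesis
    unfolding word_of_tableau_def set_map set_upt Suc_eq_plus1[symmetric] atLeastLessThanSuc_atLeastAtMost
    by blast
qed

lemma SYT3_column_count_le:
  assumes T: "T \<in> SYT3 n" and a: "a \<in> {1,2}"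
  shows "card {j \<in> {1..n}. T (Suc a, j) \<le> k} \<le> card {j \<in> {1..n}. T (a, j) \<le> k}"
proof (rule card_mono)
  have "T (a, j) < T (Suc a, j)" if "j \<in> {1..n}" for j
  proof -
    have "(a, j) \<in> cells3 n" "(Suc a, j) \<in> cells3 n"
      using a that by (auto simp: cells3_def)
    then show ?thesis
      using T by (simp add: SYT3_def)
  qed
  then show "{j \<in> {1..n}. T (Suc a, j) \<le> k} \<subseteq> {j \<in> {1..n}. T (a, j) \<le> k}"
    by force
qed simp

lemma word_of_tableau_ballot:
  assumes T: "T \<in> SYT3 n"
  shows "word_of_tableau n T \<in> ballot_words n"
proof -
  let ?w = "word_of_tableau n T"
  have count: "prefix_count i k ?w = card {j \<in> {1..n}. T (i, j) \<le> min k (3 * n)}"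
    if "i \<in> {1,2,3}" for i k
    using prefix_count_word_of_tableau[OF T that] prefix_count_min_length[of i k ?w] by simp
  have ballot: "prefix_count (Suc a) k ?w \<le> prefix_count a k ?w" if "a \<in> {1,2}" for a k
  proof -
    have letters: "a \<in> {1,2,3}" "Suc a \<in> {1,2,3}"
      using that by auto
    show ?thesis
      unfolding count[OF letters(1)] count[OF letters(2)] by (rule SYT3_column_count_le[OF T that])
  qed
  have total: "prefix_count i (3 * n) ?w = n" if "i \<in> {1,2,3}" for i
  proof -
    have "T (i, j) \<le> 3 * n" if "j \<in> {1..n}" for j
      using bij_betw_apply[OF SYT3_bij[OF T]] \<open>i \<in> {1,2,3}\<close> that by (force simp: cells3_def)
    then have "{j \<in> {1..n}. T (i, j) \<le> min (3 * n) (3 * n)} = {1..n}"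
      by auto
    then show ?thesis
      using count[OF that, of "3 * n"] by simp
  qed
  show ?thesis
    using set_word_of_tableau[OF T] ballot[of 1] ballot[of 2] total
    by (simp add: chamber_walks_def chamber_walk_def numeral_2_eq_2 numeral_3_eq_3)
qed

lemma SYT3_row_count_eq:
  assumes T: "T \<in> SYT3 n" and c: "(i, j) \<in> cells3 n"
  shows "card {j' \<in> {1..n}. T (i, j') \<le> T (i, j)} = j"
proof -
  have "{j' \<in> {1..n}. T (i, j') \<le> T (i, j)} = {1..j}"
    using SYT3_row_le_iff[OF T c] c by (auto simp: cells3_def)
  then show ?thesis
    by simp
qed

lemma SYT3_row_count_less:
  assumes T: "T \<in> SYT3 n" and c: "(i, j) \<in> cells3 n" and "k < T (i, j)"
  shows "card {j' \<in> {1..n}. T (i, j') \<le> k} < j"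
proof -
  have "{j' \<in> {1..n}. T (i, j') \<le> k} \<subseteq> {1..<j}"
  proof
    fix j'
    assume j': "j' \<in> {j' \<in> {1..n}. T (i, j') \<le> k}"
    then have "(i, j') \<in> cells3 n"
      using c by (auto simp: cells3_def)
    then have "j \<le> j' \<Longrightarrow> T (i, j) \<le> T (i, j')"
      using SYT3_row_le_iff[OF T _ c] by blast
    then have "\<not> j \<le> j'"
      using j' \<open>k < T (i, j)\<close> by auto
    then show "j' \<in> {1..<j}"
      using j' by simp
  qed
  then have "card {j' \<in> {1..n}. T (i, j') \<le> k} \<le> j - 1"
    using card_mono[of "{1..<j}"] by simp
  moreover have "1 \<le> j"
    using c by (simp add: cells3_def)
  ultimately show ?thesis
    by linarith
qed

lemma tableau_of_word_of_tableau:
  assumes T: "T \<in> SYT3 n"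
  shows "tableau_of_word n (word_of_tableau n T) = T"
proof
  fix c :: "nat \<times> nat"
  obtain i j where c: "c = (i, j)"
    by (cases c)
  show "tableau_of_word n (word_of_tableau n T) c = T c"
  proof (cases "(i, j) \<in> cells3 n")
    case False
    then show ?thesis
      using T c by (simp add: SYT3_def tableau_of_word_def)
  next
    case True
    then have i: "i \<in> {1,2,3}" and T_le: "T (i, j) \<le> 3 * n"
      using bij_betw_apply[OF SYT3_bij[OF T]] by (auto simp: cells3_def)
    have "(LEAST k. prefix_count i k (word_of_tableau n T) = j) = T (i, j)"
    proof (rule Least_equality)
      show "prefix_count i (T (i, j)) (word_of_tableau n T) = j"
        using prefix_count_word_of_tableau[OF T i T_le] SYT3_row_count_eq[OF T True] by simp
    next
      fix k
      assume k: "prefix_count i k (word_of_tableau n T) = j"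
      show "T (i, j) \<le> k"
      proof (rule ccontr)
        assume "\<not> T (i, j) \<le> k"
        then have "k < T (i, j)" "k \<le> 3 * n"
          using T_le by simp_all
        then show False
          using k prefix_count_word_of_tableau[OF T i] SYT3_row_count_less[OF T True] by force
      qed
    qed
    then show ?thesis
      using True c by (simp add: tableau_of_word_def)
  qed
qed

lemma word_of_tableau_of_word:
  assumes w: "w \<in> ballot_words n"
  shows "word_of_tableau n (tableau_of_word n w) = w"
proof (rule nth_equalityI)
  show "length (word_of_tableau n (tableau_of_word n w)) = length w"
    using ballot_wordsD(1)[OF w] by simp
next
  fix p
  assume "p < length (word_of_tableau n (tableau_of_word n w))"
  then have p: "p < 3 * n"
    by simp
  have "inv_into (cells3 n) (tableau_of_word n w) (Suc p) = (w ! p, prefix_count (w ! p) (Suc p) w)"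
    using bij_betw_imp_inj_on[OF bij_betw_tableau_of_word_cells[OF w]] tableau_of_word_nth[OF w p]
    by (rule inv_into_f_eq)
  then show "word_of_tableau n (tableau_of_word n w) ! p = w ! p"
    using p by (simp add: word_of_tableau_def del: upt_Suc)
qed

lemma bij_betw_tableau_of_word: "bij_betw (tableau_of_word n) (ballot_words n) (SYT3 n)"
  by (rule bij_betw_byWitness[where f' = "word_of_tableau n"])
    (auto simp: word_of_tableau_of_word tableau_of_word_of_tableau
      intro: tableau_of_word_SYT3 word_of_tableau_ballot)

section \<open>The event T(3,3) = 13\<close>

lemma chamber_walk_split_at_3:
  assumes w: "chamber_walk 0 0 0 X Y Z w" "k < length w" "w ! k = 3" "prefix_count 3 k w = c"
  obtains x y u v where "x + y + c = k" "c < y" "y \<le> x"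
    "chamber_walk 0 0 0 x y c u" "chamber_walk x y (Suc c) X Y Z v" "w = u @ 3 # v"
proof -
  define u where "u = take k w"
  define v where "v = drop (Suc k) w"
  have w_eq: "w = u @ 3 # v" and len_u: "length u = k"
    using id_take_nth_drop[OF w(2)] w(2,3) by (simp_all add: u_def v_def)
  then obtain x y z where u: "chamber_walk 0 0 0 x y z u" and v: "chamber_walk x y z X Y Z (3 # v)"
    using w(1) chamber_walk_append by blast
  have "z = c"
    using u w(4) prefix_count_append_left[of k u 3 "3 # v"] len_u w_eq by (simp add: chamber_walk_def)
  moreover have "x + y + z = k"
    using chamber_walk_length[OF u] len_u by simp
  moreover have v': "chamber_walk x y (Suc z) X Y Z v" and "y \<le> x"
    using v by (simp_all add: chamber_walk_Cons)
  moreover have "Suc z \<le> y"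
    using chamber_walk_bounds[OF v'] by simp
  ultimately show ?thesis
    using that u w_eq by simp
qed

lemma chamber_walks_split_at_3:
  "{w \<in> chamber_walks 0 0 0 X Y Z. k < length w \<and> w ! k = 3 \<and> prefix_count 3 k w = c} =
    (\<lambda>(_, u, v). u @ 3 # v) `
      (SIGMA (x, y):{(x, y). x + y + c = k \<and> c < y \<and> y \<le> x}.
        chamber_walks 0 0 0 x y c \<times> chamber_walks x y (Suc c) X Y Z)"
  (is "?E = ?F ` ?S")
proof (intro set_eqI iffI)
  fix w
  assume "w \<in> ?E"
  then obtain x y u v where "x + y + c = k" "c < y" "y \<le> x"
    "chamber_walk 0 0 0 x y c u" "chamber_walk x y (Suc c) X Y Z v" "w = u @ 3 # v"
    by (auto simp: chamber_walks_def elim: chamber_walk_split_at_3)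
  then show "w \<in> ?F ` ?S"
    by (force simp: chamber_walks_def)
next
  fix w
  assume "w \<in> ?F ` ?S"
  then obtain x y u v where xy: "x + y + c = k" "c < y" "y \<le> x"
    and u: "chamber_walk 0 0 0 x y c u" and v: "chamber_walk x y (Suc c) X Y Z v"
    and w_eq: "w = u @ 3 # v"
    by (auto simp: chamber_walks_def)
  have len_u: "length u = k"
    using chamber_walk_length[OF u] xy(1) by simp
  have "chamber_walk 0 0 0 X Y Z w"
    unfolding w_eq chamber_walk_append using u v xy
    by (intro exI[of _ x] exI[of _ y] exI[of _ c]) (simp add: chamber_walk_Cons)
  moreover have "prefix_count 3 k w = c"
    using u prefix_count_append_left[of k u 3 "3 # v"] len_u w_eq by (simp add: chamber_walk_def)
  ultimately show "w \<in> ?E"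
    using len_u w_eq by (simp add: chamber_walks_def nth_append)
qed

lemma card_chamber_walks_split_at_3:
  "card {w \<in> chamber_walks 0 0 0 X Y Z. k < length w \<and> w ! k = 3 \<and> prefix_count 3 k w = c} =
    (\<Sum>(x, y) \<in> {(x, y). x + y + c = k \<and> c < y \<and> y \<le> x}.
      card (chamber_walks 0 0 0 x y c) * card (chamber_walks x y (Suc c) X Y Z))"
proof -
  let ?I = "{(x, y). x + y + c = k \<and> c < y \<and> y \<le> x}"
  let ?S = "SIGMA (x, y):?I. chamber_walks 0 0 0 x y c \<times> chamber_walks x y (Suc c) X Y Z"
  have inj: "inj_on (\<lambda>(_, u, v). u @ 3 # v) ?S"
  proof (rule inj_onI)
    fix p p'
    assume p: "p \<in> ?S" "p' \<in> ?S" and eq: "(\<lambda>(_, u, v). u @ 3 # v) p = (\<lambda>(_, u, v). u @ 3 # v) p'"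
    obtain x y u v x' y' u' v' where pq: "p = ((x, y), u, v)" "p' = ((x', y'), u', v')"
      by (metis surj_pair)
    have u: "chamber_walk 0 0 0 x y c u" "chamber_walk 0 0 0 x' y' c u'"
      and xy: "x + y + c = k" "x' + y' + c = k"
      using p unfolding pq by (auto simp: chamber_walks_def)
    then have "length u = length u'"
      using chamber_walk_length[OF u(1)] chamber_walk_length[OF u(2)] by simp
    then have "u = u'" "v = v'"
      using eq unfolding pq by (auto simp: append_eq_append_conv)
    then show "p = p'"
      using u unfolding pq by (simp add: chamber_walk_def)
  qed
  have "finite ?I"
    by (rule finite_subset[of _ "{..k} \<times> {..k}"]) auto
  have "card ((\<lambda>(_, u, v). u @ 3 # v) ` ?S) = card ?S"
    by (rule card_image[OF inj])
  also have "\<dots> = (\<Sum>(x, y) \<in> ?I. card (chamber_walks 0 0 0 x y c) * card (chamber_walks x y (Suc c) X Y Z))"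
    by (subst card_SigmaI)
      (auto simp: \<open>finite ?I\<close> finite_chamber_walks card_cartesian_product intro!: sum.cong)
  finally show ?thesis
    unfolding chamber_walks_split_at_3 .
qed

lemma card_SYT3_entry_eq:
  assumes "(i, j) \<in> cells3 n"
  shows "card {T \<in> SYT3 n. T (i, j) = Suc k} =
    card {w \<in> ballot_words n. k < length w \<and> w ! k = i \<and> prefix_count i k w = j - 1}"
proof -
  have "bij_betw (tableau_of_word n)
      {w \<in> ballot_words n. k < length w \<and> w ! k = i \<and> prefix_count i k w = j - 1}
      {T \<in> SYT3 n. T (i, j) = Suc k}"
    by (rule bij_betw_Collect[OF bij_betw_tableau_of_word]) (rule tableau_of_word_eq_Suc_iff[OF _ assms])
  then show ?thesis
    by (simp add: bij_betw_same_card)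
qed

lemma card_SYT3_card_ballot_words: "card (SYT3 n) = card (ballot_words n)"
  using bij_betw_same_card[OF bij_betw_tableau_of_word] by simp

lemma card_SYT3_entry_3_3:
  assumes "3 \<le> n"
  shows "card {T \<in> SYT3 n. T (3, 3) = 13} = 1320 * card (chamber_walks 5 5 3 n n n)
    + 2673 * card (chamber_walks 6 4 3 n n n) + 1925 * card (chamber_walks 7 3 3 n n n)"
proof -
  have prefix_counts: "card (chamber_walks 0 0 0 5 5 2) = 1320" "card (chamber_walks 0 0 0 6 4 2) = 2673"
    "card (chamber_walks 0 0 0 7 3 2) = 1925"
    using card_chamber_walks_from_origin[of 2 5 5] card_chamber_walks_from_origin[of 2 4 6]
      card_chamber_walks_from_origin[of 2 3 7]
    by (simp_all add: hook_count_def fact_numeral)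
  have points: "{(x, y). x + y + 2 = (12::nat) \<and> 2 < y \<and> y \<le> x} = {(5, 5), (6, 4), (7, 3)}"
    by auto
  have "card {T \<in> SYT3 n. T (3, 3) = 13} =
      card {w \<in> ballot_words n. 12 < length w \<and> w ! 12 = 3 \<and> prefix_count 3 12 w = 2}"
    using card_SYT3_entry_eq[of 3 3 n 12] assms by (simp add: cells3_def)
  also have "\<dots> = 1320 * card (chamber_walks 5 5 3 n n n)
    + 2673 * card (chamber_walks 6 4 3 n n n) + 1925 * card (chamber_walks 7 3 3 n n n)"
    unfolding card_chamber_walks_split_at_3 points by (simp add: prefix_counts)
  finally show ?thesis .
qed

section \<open>The hook length ratios\<close>

lemma fact_shifts:
  fixes m :: nat
  defines "x \<equiv> real m + 7"
  shows "(fact (m + 9) :: real) = x * (x + 1) * (x + 2) * fact (m + 6)"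
    "(fact (m + 8) :: real) = (x - 3) * (x - 2) * (x - 1) * x * (x + 1) * fact (m + 3)"
    "(fact (m + 7) :: real) = (x - 4) * (x - 3) * (x - 2) * (x - 1) * x * fact (m + 2)"
    "(fact (m + 8) :: real) = (x - 2) * (x - 1) * x * (x + 1) * fact (m + 4)"
    "(fact (m + 7) :: real) = (x - 5) * (x - 4) * (x - 3) * (x - 2) * (x - 1) * x * fact (m + 1)"
    "(fact (m + 8) :: real) = (x - 1) * x * (x + 1) * fact (m + 5)"
    "(fact (m + 7) :: real) = (x - 6) * (x - 5) * (x - 4) * (x - 3) * (x - 2) * (x - 1) * x * fact m"
    "(fact (3 * m + 21) :: real) = (3 * x - 12) * (3 * x - 11) * (3 * x - 10) * (3 * x - 9) * (3 * x - 8)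
       * (3 * x - 7) * (3 * x - 6) * (3 * x - 5) * (3 * x - 4) * (3 * x - 3) * (3 * x - 2) * (3 * x - 1)
       * (3 * x) * fact (3 * m + 8)"
  unfolding x_def by (simp_all add: numeral_eq_Suc algebra_simps)

lemma hook_count_event_shapes:
  "hook_count (m + 4) (m + 2) (m + 2) = fact (3 * m + 8) * 12 / (fact (m + 6) * fact (m + 3) * fact (m + 2))"
  "hook_count (m + 4) (m + 3) (m + 1) = fact (3 * m + 8) * 30 / (fact (m + 6) * fact (m + 4) * fact (m + 1))"
  "hook_count (m + 4) (m + 4) m = fact (3 * m + 8) * 30 / (fact (m + 6) * fact (m + 5) * fact m)"
  "hook_count (m + 7) (m + 7) (m + 7) = fact (3 * m + 21) * 2 / (fact (m + 9) * fact (m + 8) * fact (m + 7))"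
  by (simp_all add: hook_count_def ac_simps numeral_eq_Suc del: fact_Suc)

lemma divide_scaled_quotients:
  fixes F a b c Q p q r k1 k2 :: real
  assumes "F \<noteq> 0" "a \<noteq> 0" "b \<noteq> 0" "c \<noteq> 0" "Q \<noteq> 0" "p \<noteq> 0" "q \<noteq> 0" "r \<noteq> 0" "k2 \<noteq> 0"
  shows "(F * k1 / (a * b * c)) / ((Q * F) * k2 / ((p * a) * (q * b) * (r * c))) = k1 / k2 * (p * q * r) / Q"
  using assms by (simp add: field_simps)

lemma hook_count_event_ratios:
  fixes m :: nat
  defines "x \<equiv> real m + 7"
  defines "Q \<equiv> (3 * x - 12) * (3 * x - 11) * (3 * x - 10) * (3 * x - 9) * (3 * x - 8)
       * (3 * x - 7) * (3 * x - 6) * (3 * x - 5) * (3 * x - 4) * (3 * x - 3) * (3 * x - 2) * (3 * x - 1) * (3 * x)"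
  shows "hook_count (m + 4) (m + 2) (m + 2) / hook_count (m + 7) (m + 7) (m + 7) =
      12 / 2 * ((x * (x + 1) * (x + 2)) * ((x - 3) * (x - 2) * (x - 1) * x * (x + 1))
        * ((x - 4) * (x - 3) * (x - 2) * (x - 1) * x)) / Q"
    "hook_count (m + 4) (m + 3) (m + 1) / hook_count (m + 7) (m + 7) (m + 7) =
      30 / 2 * ((x * (x + 1) * (x + 2)) * ((x - 2) * (x - 1) * x * (x + 1))
        * ((x - 5) * (x - 4) * (x - 3) * (x - 2) * (x - 1) * x)) / Q"
    "hook_count (m + 4) (m + 4) m / hook_count (m + 7) (m + 7) (m + 7) =
      30 / 2 * ((x * (x + 1) * (x + 2)) * ((x - 1) * x * (x + 1))
        * ((x - 6) * (x - 5) * (x - 4) * (x - 3) * (x - 2) * (x - 1) * x)) / Q"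
proof -
  have "x \<ge> 7"
    unfolding x_def by simp
  then have nonzero: "Q \<noteq> 0" "x * (x + 1) * (x + 2) \<noteq> 0"
    "(x - 3) * (x - 2) * (x - 1) * x * (x + 1) \<noteq> 0" "(x - 4) * (x - 3) * (x - 2) * (x - 1) * x \<noteq> 0"
    "(x - 2) * (x - 1) * x * (x + 1) \<noteq> 0" "(x - 5) * (x - 4) * (x - 3) * (x - 2) * (x - 1) * x \<noteq> 0"
    "(x - 1) * x * (x + 1) \<noteq> 0" "(x - 6) * (x - 5) * (x - 4) * (x - 3) * (x - 2) * (x - 1) * x \<noteq> 0"
    unfolding Q_def by auto
  note shifts = fact_shifts[of m, folded x_def, folded Q_def]
  show "hook_count (m + 4) (m + 2) (m + 2) / hook_count (m + 7) (m + 7) (m + 7) =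
      12 / 2 * ((x * (x + 1) * (x + 2)) * ((x - 3) * (x - 2) * (x - 1) * x * (x + 1))
        * ((x - 4) * (x - 3) * (x - 2) * (x - 1) * x)) / Q"
    unfolding hook_count_event_shapes shifts(1,2,3,8)
    by (rule divide_scaled_quotients) (use nonzero in simp_all)
  show "hook_count (m + 4) (m + 3) (m + 1) / hook_count (m + 7) (m + 7) (m + 7) =
      30 / 2 * ((x * (x + 1) * (x + 2)) * ((x - 2) * (x - 1) * x * (x + 1))
        * ((x - 5) * (x - 4) * (x - 3) * (x - 2) * (x - 1) * x)) / Q"
    unfolding hook_count_event_shapes shifts(1,4,5,8)
    by (rule divide_scaled_quotients) (use nonzero in simp_all)
  show "hook_count (m + 4) (m + 4) m / hook_count (m + 7) (m + 7) (m + 7) =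
      30 / 2 * ((x * (x + 1) * (x + 2)) * ((x - 1) * x * (x + 1))
        * ((x - 6) * (x - 5) * (x - 4) * (x - 3) * (x - 2) * (x - 1) * x)) / Q"
    unfolding hook_count_event_shapes shifts(1,6,7,8)
    by (rule divide_scaled_quotients) (use nonzero in simp_all)
qed

lemma event_polynomial_identities:
  fixes x :: real
  shows "1320 * (12 / 2 * ((x * (x + 1) * (x + 2)) * ((x - 3) * (x - 2) * (x - 1) * x * (x + 1))
        * ((x - 4) * (x - 3) * (x - 2) * (x - 1) * x)))
      + 2673 * (30 / 2 * ((x * (x + 1) * (x + 2)) * ((x - 2) * (x - 1) * x * (x + 1))
        * ((x - 5) * (x - 4) * (x - 3) * (x - 2) * (x - 1) * x)))
      + 1925 * (30 / 2 * ((x * (x + 1) * (x + 2)) * ((x - 1) * x * (x + 1))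
        * ((x - 6) * (x - 5) * (x - 4) * (x - 3) * (x - 2) * (x - 1) * x)))
    = 330 * (x ^ 2 * (x - 1) * (x + 1) ^ 2 * (x + 2) * (233 * x ^ 2 - 1933 * x + 3984))
      * (x * (x - 1) * (x - 2) * (x - 3) * (x - 4))"
    "(3 * x - 12) * (3 * x - 11) * (3 * x - 10) * (3 * x - 9) * (3 * x - 8) * (3 * x - 7) * (3 * x - 6)
      * (3 * x - 5) * (3 * x - 4) * (3 * x - 3) * (3 * x - 2) * (3 * x - 1) * (3 * x)
    = 243 * (x * (x - 1) * (x - 2) * (x - 3) * (x - 4))
      * ((3 * x - 1) * (3 * x - 2) * (3 * x - 4) * (3 * x - 5) * (3 * x - 7) * (3 * x - 8)
        * (3 * x - 10) * (3 * x - 11))"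
  by algebra (simp add: algebra_simps)

lemma hook_count_event_ratio:
  fixes m :: nat
  defines "x \<equiv> real m + 7"
  shows "(1320 * hook_count (m + 4) (m + 2) (m + 2) + 2673 * hook_count (m + 4) (m + 3) (m + 1)
      + 1925 * hook_count (m + 4) (m + 4) m) / hook_count (m + 7) (m + 7) (m + 7) =
    (110 * x ^ 2 * (x - 1) * (x + 1) ^ 2 * (x + 2) * (233 * x ^ 2 - 1933 * x + 3984))
    / (81 * (3 * x - 1) * (3 * x - 2) * (3 * x - 4) * (3 * x - 5)
       * (3 * x - 7) * (3 * x - 8) * (3 * x - 10) * (3 * x - 11))"
proof -
  define Q where "Q = (3 * x - 12) * (3 * x - 11) * (3 * x - 10) * (3 * x - 9) * (3 * x - 8)
       * (3 * x - 7) * (3 * x - 6) * (3 * x - 5) * (3 * x - 4) * (3 * x - 3) * (3 * x - 2) * (3 * x - 1) * (3 * x)"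
  define K where "K = x * (x - 1) * (x - 2) * (x - 3) * (x - 4)"
  define N where "N = x ^ 2 * (x - 1) * (x + 1) ^ 2 * (x + 2) * (233 * x ^ 2 - 1933 * x + 3984)"
  define D where "D = (3 * x - 1) * (3 * x - 2) * (3 * x - 4) * (3 * x - 5) * (3 * x - 7) * (3 * x - 8)
       * (3 * x - 10) * (3 * x - 11)"
  note identities = event_polynomial_identities[of x, folded Q_def K_def N_def D_def]
  have "x \<ge> 7"
    unfolding x_def by simp
  then have "K > 0" "D > 0"
    unfolding K_def D_def by auto
  have "(1320 * hook_count (m + 4) (m + 2) (m + 2) + 2673 * hook_count (m + 4) (m + 3) (m + 1)
      + 1925 * hook_count (m + 4) (m + 4) m) / hook_count (m + 7) (m + 7) (m + 7) =
    1320 * (hook_count (m + 4) (m + 2) (m + 2) / hook_count (m + 7) (m + 7) (m + 7))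
      + 2673 * (hook_count (m + 4) (m + 3) (m + 1) / hook_count (m + 7) (m + 7) (m + 7))
      + 1925 * (hook_count (m + 4) (m + 4) m / hook_count (m + 7) (m + 7) (m + 7))"
    by (simp add: add_divide_distrib)
  also have "\<dots> = 330 * N * K / Q"
    unfolding hook_count_event_ratios[of m, folded x_def, folded Q_def] identities(1)[symmetric]
    by (simp add: add_divide_distrib)
  also have "\<dots> = 110 * N / (81 * D)"
    unfolding identities(2) using \<open>K > 0\<close> \<open>D > 0\<close> by (simp add: field_simps)
  finally show ?thesis
    unfolding N_def D_def by (simp add: mult.assoc)
qed

theorem mainTheorem7:
  fixes n :: nat
  assumes "n \<ge> 5"
  shows "syt_prob n (\<lambda>T. T (3, 3) = 13) =
    (110 * real n ^ 2 * (real n - 1) * (real n + 1) ^ 2 * (real n + 2)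
       * (233 * real n ^ 2 - 1933 * real n + 3984))
    / (81 * (3 * real n - 1) * (3 * real n - 2) * (3 * real n - 4) * (3 * real n - 5)
       * (3 * real n - 7) * (3 * real n - 8) * (3 * real n - 10) * (3 * real n - 11))"
proof -
  have prob: "syt_prob n (\<lambda>T. T (3, 3) = 13) =
     (1320 * hook_count (n - 3) (n - 5) (n - 5) + 2673 * (if 6 \<le> n then hook_count (n - 3) (n - 4) (n - 6) else 0)
      + 1925 * (if 7 \<le> n then hook_count (n - 3) (n - 3) (n - 7) else 0)) / hook_count n n n"
    using assms
    by (simp add: syt_prob_def card_SYT3_entry_3_3 card_SYT3_card_ballot_words card_chamber_walks_to_cube)
  consider "n = 5" | "n = 6" | "7 \<le> n"
    using assms by linarith
  then show ?thesis
  proof cases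
    case 3
    then obtain m where m: "n = m + 7"
      using le_add_diff_inverse2 by metis
    have shifts: "n - 3 = m + 4" "n - 5 = m + 2" "n - 4 = m + 3" "n - 6 = m + 1" "n - 7 = m"
      and x: "real n = real m + 7"
      using m by simp_all
    show ?thesis
      unfolding prob shifts using hook_count_event_ratio[of m] unfolding x m by simp
  qed (unfold prob, simp_all add: hook_count_def fact_numeral)
qed

end
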